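(* Let $\bar\ell,m,n,k$ satisfy $m<1+n/\bar\ell$, $1\le k\le m$, and let $q=2^t\ge n+k$. Then there exists an $[[n,k,d]]_q$ qudit CSS code $\mathcal Q$ with $d\ge\min(n-m+1,m-k+1)$ such that for any $e,\ell\le\bar\ell$, every $e$-variate polynomial $P$ over $\mathbb F_q$ of degree at most $\ell$, every $A\in[k]$ and every $\beta\in\mathbb F_q$, there is a transversal (depth-one, single-qudit-per-position) physical gate $\bigotimes_{i=1}^nU_P^{\beta_i}[i]$ on $e$ code blocks which acts on $\mathcal Q^{\otimes e}$, up to a global phase, as $\overline{U_P^\beta[A]}$, i.e. multiplies $\overline{\ket{u^{(1)}}}\cdots\overline{\ket{u^{(e)}}}$ by $(-1)^{\mathrm{tr}(\beta P(u^{(1)}_A,\dots,u^{(e)}_A))}$. In particular this includes single-index addressable $\mathsf{C^{(\ell-1)}Z}$ gates across $\ell$ blocks and addressable single-qudit gates $U_\ell^\beta$. Choosing $m=\lfloor n/\bar\ell\rfloor$ and $k=m/2$, the codes are asymptotically good over growing $q$ with rate and relative distance at least $1/(2\bar\ell)$ asymptotically. *)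

theory Defs
  imports Complex_Main
begin

text \<open>A vector of F_q^n is represented by a function nat => 'a that vanishes
  at positions >= n (positions are 0-based: 0..n-1).\<close>

definition vecs :: "nat \<Rightarrow> (nat \<Rightarrow> 'a::zero) set" where
  "vecs n = {x. \<forall>i\<ge>n. x i = 0}"

definition vadd :: "(nat \<Rightarrow> 'a::plus) \<Rightarrow> (nat \<Rightarrow> 'a) \<Rightarrow> (nat \<Rightarrow> 'a)" where
  "vadd x y = (\<lambda>i. x i + y i)"

definition vscale :: "'a::times \<Rightarrow> (nat \<Rightarrow> 'a) \<Rightarrow> (nat \<Rightarrow> 'a)" where
  "vscale c x = (\<lambda>i. c * x i)"

definition is_subspace :: "nat \<Rightarrow> (nat \<Rightarrow> 'a::field) set \<Rightarrow> bool" where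
  "is_subspace n C \<longleftrightarrow> C \<subseteq> vecs n \<and> (\<lambda>_. 0) \<in> C \<and>
     (\<forall>x\<in>C. \<forall>y\<in>C. vadd x y \<in> C) \<and> (\<forall>c. \<forall>x\<in>C. vscale c x \<in> C)"

definition dotp :: "nat \<Rightarrow> (nat \<Rightarrow> 'a::comm_ring) \<Rightarrow> (nat \<Rightarrow> 'a) \<Rightarrow> 'a" where
  "dotp n x y = (\<Sum>i<n. x i * y i)"

definition dual_code :: "nat \<Rightarrow> (nat \<Rightarrow> 'a::field) set \<Rightarrow> (nat \<Rightarrow> 'a) set" where
  "dual_code n C = {y \<in> vecs n. \<forall>x\<in>C. dotp n x y = 0}"

definition hwt :: "nat \<Rightarrow> (nat \<Rightarrow> 'a::zero) \<Rightarrow> nat" where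
  "hwt n x = card {i. i < n \<and> x i \<noteq> 0}"

text \<open>A qudit CSS code [[n,k]]_q given by F_q-linear classical codes C2 \<subseteq> C1 \<subseteq> F_q^n
  together with a linear encoding map Enc : F_q^k \<rightarrow> C1 whose image is a complement
  of C2 in C1 (so k = dim C1 - dim C2).\<close>

definition css_code ::
  "nat \<Rightarrow> nat \<Rightarrow> (nat \<Rightarrow> 'a::field) set \<Rightarrow> (nat \<Rightarrow> 'a) set \<Rightarrow> ((nat \<Rightarrow> 'a) \<Rightarrow> (nat \<Rightarrow> 'a)) \<Rightarrow> bool"
where
  "css_code n k C1 C2 Enc \<longleftrightarrow>
     is_subspace n C1 \<and> is_subspace n C2 \<and> C2 \<subseteq> C1 \<and>
     (\<forall>u\<in>vecs k. Enc u \<in> C1) \<and>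
     (\<forall>u\<in>vecs k. \<forall>v\<in>vecs k. Enc (vadd u v) = vadd (Enc u) (Enc v)) \<and>
     (\<forall>c. \<forall>u\<in>vecs k. Enc (vscale c u) = vscale c (Enc u)) \<and>
     (\<forall>x\<in>C1. \<exists>!p. p \<in> vecs k \<times> C2 \<and> x = vadd (Enc (fst p)) (snd p))"

text \<open>Distance of a CSS code: minimum Hamming weight of a nontrivial logical
  operator, i.e. of a vector in (C1 - C2) \<union> (C2^\<perp> - C1^\<perp>).  We state "distance \<ge> d".\<close>

definition css_distance_ge :: "nat \<Rightarrow> (nat \<Rightarrow> 'a::field) set \<Rightarrow> (nat \<Rightarrow> 'a) set \<Rightarrow> nat \<Rightarrow> bool" where
  "css_distance_ge n C1 C2 d \<longleftrightarrow>
     (\<forall>v \<in> (C1 - C2) \<union> (dual_code n C2 - dual_code n C1). d \<le> hwt n v)"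

text \<open>A state of one block of n qudits is a function from computational basis words
  (elements of vecs n) to amplitudes.\<close>

definition logical_state ::
  "(nat \<Rightarrow> 'a::field) set \<Rightarrow> ((nat \<Rightarrow> 'a) \<Rightarrow> (nat \<Rightarrow> 'a)) \<Rightarrow> (nat \<Rightarrow> 'a) \<Rightarrow> (nat \<Rightarrow> 'a) \<Rightarrow> complex"
where
  "logical_state C2 Enc u =
     (\<lambda>x. if x \<in> {vadd (Enc u) c | c. c \<in> C2} then complex_of_real (1 / sqrt (real (card C2))) else 0)"

text \<open>States on e blocks: basis indexed by xs with xs j \<in> vecs n for j < e (block j),
  xs j = 0 for j \<ge> e.  Tensor product of e single-block states.\<close>

definition blocks :: "nat \<Rightarrow> nat \<Rightarrow> (nat \<Rightarrow> nat \<Rightarrow> 'a::zero) set" where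
  "blocks n e = {xs. (\<forall>j<e. xs j \<in> vecs n) \<and> (\<forall>j\<ge>e. xs j = (\<lambda>_. 0))}"

definition tensor_state ::
  "nat \<Rightarrow> nat \<Rightarrow> (nat \<Rightarrow> (nat \<Rightarrow> 'a::zero) \<Rightarrow> complex) \<Rightarrow> (nat \<Rightarrow> nat \<Rightarrow> 'a) \<Rightarrow> complex" where
  "tensor_state n e \<psi> = (\<lambda>xs. if xs \<in> blocks n e then (\<Prod>j<e. \<psi> j (xs j)) else 0)"

definition apply_diag :: "('b \<Rightarrow> complex) \<Rightarrow> ('b \<Rightarrow> complex) \<Rightarrow> ('b \<Rightarrow> complex)" where
  "apply_diag f \<psi> = (\<lambda>x. f x * \<psi> x)"

text \<open>Absolute trace F_{2^t} \<rightarrow> F_2 (values 0 or 1 inside F_q).\<close>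

definition ftrace :: "nat \<Rightarrow> 'a::field \<Rightarrow> 'a" where
  "ftrace t x = (\<Sum>i<t. x ^ (2 ^ i))"

definition trsign :: "nat \<Rightarrow> 'a::field \<Rightarrow> complex" where
  "trsign t y = (if ftrace t y = 0 then 1 else -1)"

definition mono_exps :: "nat \<Rightarrow> nat \<Rightarrow> (nat \<Rightarrow> nat) set" where
  "mono_exps e l = {\<alpha>. (\<forall>i\<ge>e. \<alpha> i = 0) \<and> (\<Sum>i<e. \<alpha> i) \<le> l}"

definition mpoly_eval :: "nat \<Rightarrow> nat \<Rightarrow> ((nat \<Rightarrow> nat) \<Rightarrow> 'a::field) \<Rightarrow> (nat \<Rightarrow> 'a) \<Rightarrow> 'a" where
  "mpoly_eval e l c x = (\<Sum>\<alpha>\<in>mono_exps e l. c \<alpha> * (\<Prod>i<e. x i ^ \<alpha> i))"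

text \<open>The transversal physical gate \<Otimes>_{i<n} U_P^{\<beta>_i}[i] on e blocks, where U_P^b acts on the
  e qudits at position i (one in each block) by |y_1..y_e> \<mapsto> (-1)^{tr(b P(y))} |y_1..y_e>.\<close>

definition transversal_phase ::
  "nat \<Rightarrow> nat \<Rightarrow> ((nat \<Rightarrow> 'a::field) \<Rightarrow> 'a) \<Rightarrow> (nat \<Rightarrow> 'a) \<Rightarrow> (nat \<Rightarrow> nat \<Rightarrow> 'a) \<Rightarrow> complex" where
  "transversal_phase t n P \<beta>s = (\<lambda>xs. \<Prod>i<n. trsign t (\<beta>s i * P (\<lambda>j. xs j i)))"

end

theory Submission
  imports Defs "HOL-Computational_Algebra.Polynomial"
begin

text \<open>The code is a punctured Reed--Solomon code. Codewords of \<open>C\<^sub>1\<close> are the values at \<open>n\<close>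
  distinct points of the polynomials of degree \<open>< m\<close>; \<open>C\<^sub>2\<close> consists of those that also vanish at
  \<open>k\<close> further points, and a logical word is the list of values at these extra points. Both
  distance bounds are root counts: a nonzero polynomial of degree \<open>< m\<close> has at most \<open>m - 1\<close>
  roots, and a nonzero word of \<open>C\<^sub>2\<^sup>\<perp>\<close> of weight \<open>\<le> m - k\<close> would pair nontrivially with the
  word of \<open>C\<^sub>2\<close> given by a polynomial vanishing at the \<open>k\<close> logical points and on all of its
  support but one point.

  For the gate, if \<open>F\<^sub>1, \<dots>, F\<^sub>e\<close> have degree \<open>< m\<close> then \<open>P(F\<^sub>1, \<dots>, F\<^sub>e)\<close> has degree
  \<open>\<le> l (m - 1) < n\<close>, so its value at a logical point is a fixed linear combination (with
  Lagrange weights) of its values at the \<open>n\<close> physical points. Since the trace is additive in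
  characteristic 2, the phase \<open>(-1)\<^bsup>tr(\<beta> P)\<^esup>\<close> then splits into a product of one phase per
  physical position.\<close>

lemma power_card_eq_same:
  fixes x :: "'a::{finite,field}"
  shows "x ^ card (UNIV :: 'a set) = x"
proof (cases "x = 0")
  case False
  let ?U = "UNIV - {0 :: 'a}"
  have "bij_betw (\<lambda>y. x * y) ?U ?U"
    by (rule bij_betw_byWitness[where f' = "\<lambda>y. y / x"]) (use False in auto)
  then have "(\<Prod>y\<in>?U. x * y) = (\<Prod>y\<in>?U. y)"
    using prod.reindex_bij_betw[of "\<lambda>y. x * y" ?U ?U "\<lambda>y. y"] by simp
  moreover have "(\<Prod>y\<in>?U. x * y) = x ^ card ?U * (\<Prod>y\<in>?U. y)"
    using prod.distrib[of "\<lambda>_. x" "\<lambda>y. y" ?U] by simp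
  moreover have "(\<Prod>y\<in>?U. y) \<noteq> 0"
    by simp
  ultimately have "x ^ card ?U = 1"
    by simp
  moreover have "card (UNIV :: 'a set) = Suc (card ?U)"
    by (rule card_Suc_Diff1[symmetric]) simp_all
  ultimately show ?thesis
    by (metis power_Suc2 mult_1)
qed (simp add: finite_UNIV_card_ge_0)

lemma CHAR_eq_2_if_card_eq_power_2:
  assumes "card (UNIV :: 'a::{finite,field} set) = 2 ^ t"
  shows "CHAR('a) = 2"
proof -
  have "card {0, 1 :: 'a} \<le> 2 ^ t"
    unfolding assms[symmetric] by (rule card_mono) simp_all
  then have "t \<noteq> 0"
    by (cases "t = 0") simp_all
  then have "even (card (UNIV :: 'a set))"
    using assms by simp
  have "(-1 :: 'a) = (-1) ^ card (UNIV :: 'a set)"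
    by (rule power_card_eq_same[symmetric])
  also have "\<dots> = 1"
    using \<open>even (card (UNIV :: 'a set))\<close> by (rule neg_one_even_power)
  finally have "(-1 :: 'a) = 1" .
  then have "(1 :: 'a) + 1 = 0"
    using add.right_inverse[of "1 :: 'a"] by (simp only:)
  then have "of_nat 2 = (0 :: 'a)"
    by (simp only: of_nat_numeral one_add_one)
  then have "CHAR('a) dvd 2"
    by (simp only: of_nat_eq_0_iff_char_dvd)
  then show ?thesis
    using CHAR_not_1[where 'a = 'a] two_is_prime_nat unfolding prime_nat_iff by auto
qed

lemma ftrace_add:
  assumes "CHAR('a::field) = 2"
  shows "ftrace t (a + b :: 'a) = ftrace t a + ftrace t b"
  unfolding ftrace_def
  by (simp add: freshmans_dream'[where n = i and m = "2 ^ i" for i] assms sum.distrib)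

lemma ftrace_square:
  assumes "card (UNIV :: 'a::{finite,field} set) = 2 ^ t"
  shows "ftrace t y ^ 2 = ftrace t (y :: 'a)"
proof -
  have char: "CHAR('a) = 2"
    using assms by (rule CHAR_eq_2_if_card_eq_power_2)
  have "ftrace t y ^ 2 = (\<Sum>i<t. y ^ 2 ^ Suc i)"
    unfolding ftrace_def
    by (simp add: freshmans_dream_sum'[where n = 1] char power_mult[symmetric] mult.commute)
  also have "\<dots> = (\<Sum>i<t. y ^ 2 ^ i)"
  proof (cases t)
    case (Suc s)
    have "y ^ 2 ^ t = y"
      using power_card_eq_same[of y] assms by simp
    then show ?thesis
      unfolding Suc sum.lessThan_Suc_shift[of "\<lambda>i. y ^ 2 ^ i"] sum.lessThan_Suc[of "\<lambda>i. y ^ 2 ^ Suc i"]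
      by (simp add: Suc add.commute)
  qed simp
  finally show ?thesis
    unfolding ftrace_def .
qed

lemma ftrace_eq_0_or_1:
  assumes "card (UNIV :: 'a::{finite,field} set) = 2 ^ t"
  shows "ftrace t (y :: 'a) = 0 \<or> ftrace t y = 1"
proof -
  have "ftrace t y * (ftrace t y - 1) = 0"
    using ftrace_square[OF assms, of y] by (simp add: power2_eq_square algebra_simps)
  then show ?thesis
    by simp
qed

lemma trsign_add:
  assumes "card (UNIV :: 'a::{finite,field} set) = 2 ^ t"
  shows "trsign t (a + b :: 'a) = trsign t a * trsign t b"
proof -
  have char: "CHAR('a) = 2"
    using assms by (rule CHAR_eq_2_if_card_eq_power_2)
  then have "(1 :: 'a) + 1 = 0"
    using of_nat_CHAR[where 'a = 'a] by simp
  then show ?thesis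
    unfolding trsign_def ftrace_add[OF char]
    using ftrace_eq_0_or_1[OF assms, of a] ftrace_eq_0_or_1[OF assms, of b] by auto
qed

lemma trsign_0 [simp]: "trsign t (0 :: 'a::field) = 1"
  by (simp add: trsign_def ftrace_def power_0_left)

lemma trsign_sum:
  assumes "card (UNIV :: 'a::{finite,field} set) = 2 ^ t"
  shows "trsign t (\<Sum>i\<in>I. f i :: 'a) = (\<Prod>i\<in>I. trsign t (f i))"
  by (induction I rule: infinite_finite_induct) (simp_all add: trsign_add[OF assms])

definition lagrange_basis :: "'b set \<Rightarrow> ('b \<Rightarrow> 'a::field) \<Rightarrow> 'b \<Rightarrow> 'a poly" where
  "lagrange_basis S p i = (\<Prod>j\<in>S - {i}. smult (1 / (p i - p j)) [:- p j, 1:])"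

definition lagrange_interp :: "'b set \<Rightarrow> ('b \<Rightarrow> 'a::field) \<Rightarrow> ('b \<Rightarrow> 'a) \<Rightarrow> 'a poly" where
  "lagrange_interp S p v = (\<Sum>i\<in>S. smult (v i) (lagrange_basis S p i))"

lemma poly_lagrange_basis:
  "poly (lagrange_basis S p i) x = (\<Prod>j\<in>S - {i}. (x - p j) / (p i - p j))"
  unfolding lagrange_basis_def poly_prod
  by (intro prod.cong refl) (simp add: divide_inverse algebra_simps)

lemma poly_lagrange_basis_node:
  assumes "finite S" "inj_on p S" "i \<in> S" "j \<in> S"
  shows "poly (lagrange_basis S p i) (p j) = (if i = j then 1 else 0)"
proof (cases "i = j")
  case True
  have "p i \<noteq> p j'" if "j' \<in> S - {i}" for j'
    using that assms(2,3) by (auto dest: inj_onD)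
  then show ?thesis
    unfolding poly_lagrange_basis using True by (simp add: prod.neutral)
next
  case False
  then show ?thesis
    unfolding poly_lagrange_basis using assms by (auto intro: prod_zero)
qed

lemma degree_lagrange_basis:
  assumes "finite S" "i \<in> S"
  shows "degree (lagrange_basis S p i) \<le> card S - 1"
proof -
  have "degree (lagrange_basis S p i) \<le> (\<Sum>j\<in>S - {i}. degree (smult (1 / (p i - p j)) [:- p j, 1:]))"
    unfolding lagrange_basis_def
    using degree_prod_sum_le[of "S - {i}" "\<lambda>j. smult (1 / (p i - p j)) [:- p j, 1:]"] assms(1)
    by (simp add: comp_def)
  also have "\<dots> \<le> (\<Sum>j\<in>S - {i}. 1)"
    by (intro sum_mono) (simp add: le_trans[OF degree_smult_le])
  finally show ?thesis
    using assms by simp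
qed

lemma poly_lagrange_interp_node:
  assumes "finite S" "inj_on p S" "j \<in> S"
  shows "poly (lagrange_interp S p v) (p j) = v j"
  unfolding lagrange_interp_def poly_sum
  using assms by (simp add: poly_lagrange_basis_node if_distrib sum.delta cong: if_cong)

lemma degree_lagrange_interp:
  assumes "finite S" "S \<noteq> {}"
  shows "degree (lagrange_interp S p v) < card S"
proof -
  have "degree (lagrange_interp S p v) \<le> card S - 1"
    unfolding lagrange_interp_def using assms(1)
    by (intro degree_sum_le) (auto intro: le_trans[OF degree_smult_le] degree_lagrange_basis[unfolded One_nat_def])
  moreover have "card S > 0"
    using assms by (simp add: card_gt_0_iff)
  ultimately show ?thesis
    by linarith
qed

lemma lagrange_interp_add:
  "lagrange_interp S p (\<lambda>i. v i + w i) = lagrange_interp S p v + lagrange_interp S p w"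
  unfolding lagrange_interp_def by (simp add: smult_add_left sum.distrib)

lemma smult_sum_right: "smult c (\<Sum>i\<in>S. f i) = (\<Sum>i\<in>S. smult c (f i))"
  by (induction S rule: infinite_finite_induct) (simp_all add: smult_add_right)

lemma lagrange_interp_smult:
  "lagrange_interp S p (\<lambda>i. c * v i) = smult c (lagrange_interp S p v)"
  unfolding lagrange_interp_def by (simp add: smult_sum_right)

lemma lagrange_interp_values:
  fixes g :: "'a::field poly"
  assumes "finite S" "inj_on p S" "degree g < card S"
  shows "lagrange_interp S p (\<lambda>i. poly g (p i)) = g"
proof (rule poly_eqI_degree[where A = "p ` S"])
  have card: "card (p ` S) = card S"
    using assms(2) by (rule card_image)
  show "poly (lagrange_interp S p (\<lambda>i. poly g (p i))) x = poly g x" if "x \<in> p ` S" for x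
    using that assms by (auto simp: poly_lagrange_interp_node)
  show "degree g < card (p ` S)"
    using card assms(3) by simp
  have "S \<noteq> {}"
    using assms(3) by auto
  then show "degree (lagrange_interp S p (\<lambda>i. poly g (p i))) < card (p ` S)"
    using card degree_lagrange_interp[OF assms(1)] by simp
qed

lemma poly_eq_sum_lagrange_basis:
  fixes g :: "'a::field poly"
  assumes "finite S" "inj_on p S" "degree g < card S"
  shows "poly g z = (\<Sum>i\<in>S. poly (lagrange_basis S p i) z * poly g (p i))"
  by (subst lagrange_interp_values[OF assms, symmetric])
     (simp add: lagrange_interp_def poly_sum mult.commute)

definition mpoly_subst :: "nat \<Rightarrow> nat \<Rightarrow> ((nat \<Rightarrow> nat) \<Rightarrow> 'a::field) \<Rightarrow> (nat \<Rightarrow> 'a poly) \<Rightarrow> 'a poly" where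
  "mpoly_subst e l c F = (\<Sum>\<alpha>\<in>mono_exps e l. smult (c \<alpha>) (\<Prod>j<e. F j ^ \<alpha> j))"

lemma poly_mpoly_subst: "poly (mpoly_subst e l c F) z = mpoly_eval e l c (\<lambda>j. poly (F j) z)"
  unfolding mpoly_subst_def mpoly_eval_def by (simp add: poly_sum poly_prod)

lemma degree_monomial_subst:
  assumes "\<And>j. j < e \<Longrightarrow> degree (F j) \<le> d" "\<alpha> \<in> mono_exps e l"
  shows "degree (\<Prod>j<e. F j ^ \<alpha> j) \<le> l * d"
proof -
  have "degree (\<Prod>j<e. F j ^ \<alpha> j) \<le> (\<Sum>j<e. degree (F j ^ \<alpha> j))"
    using degree_prod_sum_le[of "{..<e}" "\<lambda>j. F j ^ \<alpha> j"] by (simp add: comp_def)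
  also have "\<dots> \<le> (\<Sum>j<e. d * \<alpha> j)"
    using assms(1) by (intro sum_mono) (simp add: le_trans[OF degree_power_le])
  also have "\<dots> = d * (\<Sum>j<e. \<alpha> j)"
    by (simp add: sum_distrib_left)
  also have "\<dots> \<le> l * d"
    using assms(2) by (simp add: mono_exps_def mult.commute)
  finally show ?thesis .
qed

lemma degree_mpoly_subst:
  assumes "\<And>j. j < e \<Longrightarrow> degree (F j) \<le> d"
  shows "degree (mpoly_subst e l c F) \<le> l * d"
  unfolding mpoly_subst_def
proof (cases "finite (mono_exps e l)")
  case True
  then show "degree (\<Sum>\<alpha>\<in>mono_exps e l. smult (c \<alpha>) (\<Prod>j<e. F j ^ \<alpha> j)) \<le> l * d"
    by (intro degree_sum_le) (auto intro: le_trans[OF degree_smult_le] degree_monomial_subst assms)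
qed simp

lemma mpoly_eval_cong:
  "(\<And>j. j < e \<Longrightarrow> x j = y j) \<Longrightarrow> mpoly_eval e l c x = mpoly_eval e l c y"
  unfolding mpoly_eval_def by (intro sum.cong refl arg_cong2[where f = "(*)"] prod.cong) auto

lemma mpoly_eval_interpolation:
  assumes "finite S" "inj_on p S" "\<And>j. j < e \<Longrightarrow> degree (F j) \<le> d" "l * d < card S"
  shows "mpoly_eval e l c (\<lambda>j. poly (F j) z)
           = (\<Sum>i\<in>S. poly (lagrange_basis S p i) z * mpoly_eval e l c (\<lambda>j. poly (F j) (p i)))"
proof -
  have "degree (mpoly_subst e l c F) < card S"
    using degree_mpoly_subst[of e F d l c, OF assms(3)] assms(4) by linarith
  from poly_eq_sum_lagrange_basis[OF assms(1,2) this, of z] show ?thesis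
    by (simp add: poly_mpoly_subst)
qed

definition eval_vec :: "nat \<Rightarrow> (nat \<Rightarrow> 'a::field) \<Rightarrow> 'a poly \<Rightarrow> nat \<Rightarrow> 'a" where
  "eval_vec n pt f = (\<lambda>i. if i < n then poly f (pt i) else 0)"

lemma eval_vec_add: "eval_vec n pt (f + g) = vadd (eval_vec n pt f) (eval_vec n pt g)"
  unfolding eval_vec_def vadd_def by auto

lemma eval_vec_smult: "eval_vec n pt (smult c f) = vscale c (eval_vec n pt f)"
  unfolding eval_vec_def vscale_def by auto

lemma eval_vec_0: "eval_vec n pt 0 = (\<lambda>_. 0)"
  unfolding eval_vec_def by auto

lemma eval_vec_in_vecs: "eval_vec n pt f \<in> vecs n"
  unfolding eval_vec_def vecs_def by auto

lemma is_subspace_eval_vec_image: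
  assumes "0 \<in> Q" "\<And>f g. f \<in> Q \<Longrightarrow> g \<in> Q \<Longrightarrow> f + g \<in> Q" "\<And>c f. f \<in> Q \<Longrightarrow> smult c f \<in> Q"
  shows "is_subspace n (eval_vec n pt ` Q)"
  unfolding is_subspace_def
proof (intro conjI ballI allI)
  show "eval_vec n pt ` Q \<subseteq> vecs n"
    using eval_vec_in_vecs by blast
  show "(\<lambda>_. 0) \<in> eval_vec n pt ` Q"
    using assms(1) eval_vec_0[of n pt] by force
  show "vadd x y \<in> eval_vec n pt ` Q" if "x \<in> eval_vec n pt ` Q" "y \<in> eval_vec n pt ` Q" for x y
    using that assms(2) by (auto simp flip: eval_vec_add)
  show "vscale c x \<in> eval_vec n pt ` Q" if "x \<in> eval_vec n pt ` Q" for c x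
    using that assms(3) by (auto simp flip: eval_vec_smult)
qed

lemma eval_vec_inj:
  assumes "inj_on pt {..<n}" "eval_vec n pt f = eval_vec n pt g" "degree f < n" "degree g < n"
  shows "f = g"
proof (rule poly_eqI_degree[where A = "pt ` {..<n}"])
  show "poly f x = poly g x" if x: "x \<in> pt ` {..<n}" for x
  proof -
    obtain i where "i < n" "x = pt i"
      using x by auto
    then show ?thesis
      using fun_cong[OF assms(2), of i] by (simp add: eval_vec_def)
  qed
  show "degree f < card (pt ` {..<n})" "degree g < card (pt ` {..<n})"
    using assms by (simp_all add: card_image)
qed

lemma hwt_eval_vec_ge:
  assumes "inj_on pt {..<n}" "f \<noteq> 0"
  shows "n - degree f \<le> hwt n (eval_vec n pt f)"
proof -
  let ?Z = "{i. i < n \<and> poly f (pt i) = 0}"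
  have "card ?Z = card (pt ` ?Z)"
    using assms(1) by (intro card_image[symmetric] inj_on_subset[OF assms(1)]) auto
  also have "\<dots> \<le> card {x. poly f x = 0}"
    using assms(2) by (intro card_mono poly_roots_finite) auto
  also have "\<dots> \<le> degree f"
    using assms(2) by (rule card_poly_roots_bound)
  finally have "card ?Z \<le> degree f" .
  moreover have "{i. i < n \<and> eval_vec n pt f i \<noteq> 0} = {..<n} - ?Z"
    by (auto simp: eval_vec_def)
  moreover have "card ({..<n} - ?Z) = n - card ?Z"
    by (subst card_Diff_subset) auto
  ultimately show ?thesis
    unfolding hwt_def by simp
qed

text \<open>\<open>pt 0, \<dots>, pt (n - 1)\<close> are the physical evaluation points and \<open>pt (n + A)\<close> is the
  point carrying logical qudit \<open>A\<close>.\<close>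

locale rs_css =
  fixes n k m :: nat and pt :: "nat \<Rightarrow> 'a::field"
  assumes inj_pt: "inj_on pt {..<n + k}"
    and k_pos: "0 < k" and k_le_m: "k \<le> m" and m_le_n: "m \<le> n"
begin

definition vanishing_polys :: "'a poly set" where
  "vanishing_polys = {f. degree f < m \<and> (\<forall>A<k. poly f (pt (n + A)) = 0)}"

definition rs_code :: "(nat \<Rightarrow> 'a) set" where
  "rs_code = eval_vec n pt ` {f. degree f < m}"

definition rs_subcode :: "(nat \<Rightarrow> 'a) set" where
  "rs_subcode = eval_vec n pt ` vanishing_polys"

definition message_poly :: "(nat \<Rightarrow> 'a) \<Rightarrow> 'a poly" where
  "message_poly u = lagrange_interp {..<k} (\<lambda>A. pt (n + A)) u"

definition rs_encode :: "(nat \<Rightarrow> 'a) \<Rightarrow> nat \<Rightarrow> 'a" where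
  "rs_encode u = eval_vec n pt (message_poly u)"

lemma inj_on_pt: "inj_on pt {..<n}"
  using inj_pt by (rule inj_on_subset) auto

lemma inj_on_message_pt: "inj_on (\<lambda>A. pt (n + A)) {..<k}"
  using inj_pt by (auto intro!: inj_onI dest: inj_onD)

lemma pt_neq_message_pt: "i < n \<Longrightarrow> A < k \<Longrightarrow> pt i \<noteq> pt (n + A)"
  using inj_onD[OF inj_pt, of i "n + A"] by auto

lemma poly_message_poly: "A < k \<Longrightarrow> poly (message_poly u) (pt (n + A)) = u A"
  unfolding message_poly_def
  using poly_lagrange_interp_node[OF _ inj_on_message_pt, of A u] by simp

lemma degree_message_poly: "degree (message_poly u) < k"
  unfolding message_poly_def
  using degree_lagrange_interp[of "{..<k}" "\<lambda>A. pt (n + A)" u] k_pos by (simp add: lessThan_empty_iff)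

lemma message_poly_add: "message_poly (vadd u v) = message_poly u + message_poly v"
  unfolding message_poly_def vadd_def by (rule lagrange_interp_add)

lemma message_poly_smult: "message_poly (vscale c u) = smult c (message_poly u)"
  unfolding message_poly_def vscale_def by (rule lagrange_interp_smult)

lemma degree_message_poly_add_vanishing:
  "g \<in> vanishing_polys \<Longrightarrow> degree (message_poly u + g) < m"
  using degree_add_le_max[of "message_poly u" g] degree_message_poly[of u] k_le_m
  unfolding vanishing_polys_def by auto

lemma is_subspace_rs_code: "is_subspace n rs_code"
  unfolding rs_code_def
  by (rule is_subspace_eval_vec_image)
     (use k_pos k_le_m in \<open>auto intro: le_less_trans[OF degree_add_le_max] le_less_trans[OF degree_smult_le]\<close>)

lemma is_subspace_rs_subcode: "is_subspace n rs_subcode"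
  unfolding rs_subcode_def vanishing_polys_def
  by (rule is_subspace_eval_vec_image)
     (use k_pos k_le_m in \<open>auto intro: le_less_trans[OF degree_add_le_max] le_less_trans[OF degree_smult_le]\<close>)

lemma rs_decomposition_exists:
  assumes "degree f < m"
  obtains u g where "u \<in> vecs k" "g \<in> vanishing_polys" "f = message_poly u + g"
proof
  define u where "u = (\<lambda>A. if A < k then poly f (pt (n + A)) else 0)"
  show "u \<in> vecs k"
    unfolding u_def vecs_def by simp
  have "degree (f - message_poly u) < m"
    using degree_diff_le_max[of f "message_poly u"] assms degree_message_poly[of u] k_le_m by linarith
  then show "f - message_poly u \<in> vanishing_polys"
    unfolding vanishing_polys_def by (simp add: poly_message_poly u_def)
qed simp

lemma rs_decomposition_unique:
  assumes "u \<in> vecs k" "u' \<in> vecs k" "g \<in> vanishing_polys" "g' \<in> vanishing_polys"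
    and "eval_vec n pt (message_poly u + g) = eval_vec n pt (message_poly u' + g')"
  shows "u = u'"
proof
  have "degree (message_poly u + g) < n" "degree (message_poly u' + g') < n"
    using degree_message_poly_add_vanishing assms(3,4) m_le_n by (meson order_less_le_trans)+
  then have eq: "message_poly u + g = message_poly u' + g'"
    by (rule eval_vec_inj[OF inj_on_pt assms(5)])
  fix A
  show "u A = u' A"
  proof (cases "A < k")
    case True
    then show ?thesis
      using arg_cong[OF eq, of "\<lambda>f. poly f (pt (n + A))"] assms(3,4)
      by (simp add: poly_message_poly vanishing_polys_def)
  qed (use assms(1,2) in \<open>simp add: vecs_def\<close>)
qed

lemma css_code_rs: "css_code n k rs_code rs_subcode rs_encode"
  unfolding css_code_def
proof (intro conjI ballI allI is_subspace_rs_code is_subspace_rs_subcode)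
  show "rs_subcode \<subseteq> rs_code"
    unfolding rs_subcode_def rs_code_def vanishing_polys_def by auto
  show "rs_encode u \<in> rs_code" for u
    unfolding rs_encode_def rs_code_def using degree_message_poly[of u] k_le_m by auto
  show "rs_encode (vadd u v) = vadd (rs_encode u) (rs_encode v)" for u v
    unfolding rs_encode_def by (simp add: message_poly_add eval_vec_add)
  show "rs_encode (vscale c u) = vscale c (rs_encode u)" for c u
    unfolding rs_encode_def by (simp add: message_poly_smult eval_vec_smult)
  fix x
  assume "x \<in> rs_code"
  then obtain f where f: "degree f < m" "x = eval_vec n pt f"
    unfolding rs_code_def by auto
  obtain u g where "u \<in> vecs k" "g \<in> vanishing_polys" "f = message_poly u + g"
    using rs_decomposition_exists[OF f(1)] .
  then have ug: "u \<in> vecs k" "g \<in> vanishing_polys" "x = vadd (rs_encode u) (eval_vec n pt g)"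
    by (simp_all add: f(2) rs_encode_def eval_vec_add)
  show "\<exists>!p. p \<in> vecs k \<times> rs_subcode \<and> x = vadd (rs_encode (fst p)) (snd p)"
  proof (rule ex1I[of _ "(u, eval_vec n pt g)"])
    show "(u, eval_vec n pt g) \<in> vecs k \<times> rs_subcode \<and> x = vadd (rs_encode (fst (u, eval_vec n pt g))) (snd (u, eval_vec n pt g))"
      using ug unfolding rs_subcode_def by auto
    fix p
    assume p: "p \<in> vecs k \<times> rs_subcode \<and> x = vadd (rs_encode (fst p)) (snd p)"
    then obtain g' where g': "g' \<in> vanishing_polys" "snd p = eval_vec n pt g'"
      unfolding rs_subcode_def by auto
    have "fst p = u"
    proof (rule rs_decomposition_unique)
      show "eval_vec n pt (message_poly (fst p) + g') = eval_vec n pt (message_poly u + g)"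
        using p g' ug by (simp add: rs_encode_def eval_vec_add)
    qed (use p g' ug in auto)
    moreover have "snd p = eval_vec n pt g"
      using p ug \<open>fst p = u\<close> by (auto simp: vadd_def fun_eq_iff)
    ultimately show "p = (u, eval_vec n pt g)"
      by (simp add: prod_eq_iff)
  qed
qed

lemma hwt_rs_code_minus_subcode:
  assumes "v \<in> rs_code - rs_subcode"
  shows "n - m + 1 \<le> hwt n v"
proof -
  obtain f where f: "degree f < m" "v = eval_vec n pt f"
    using assms unfolding rs_code_def by auto
  have "f \<noteq> 0"
    using assms f(2) k_pos k_le_m unfolding rs_subcode_def vanishing_polys_def by auto
  then have "n - degree f \<le> hwt n v"
    unfolding f(2) by (rule hwt_eval_vec_ge[OF inj_on_pt])
  then show ?thesis
    using f(1) m_le_n by linarith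
qed

lemma separating_vanishing_poly:
  assumes "S \<subseteq> {..<n}" "i0 \<in> S" "card S \<le> m - k"
  obtains f where "f \<in> vanishing_polys" "\<And>i. i \<in> S - {i0} \<Longrightarrow> poly f (pt i) = 0"
    "poly f (pt i0) \<noteq> 0"
proof
  define G where "G = (\<Prod>A<k. [:- pt (n + A), 1:])"
  define h where "h = (\<Prod>i\<in>S - {i0}. [:- pt i, 1:])"
  have fin: "finite S"
    using assms(1) finite_subset by blast
  have "degree G \<le> k"
    unfolding G_def using degree_prod_sum_le[of "{..<k}" "\<lambda>A. [:- pt (n + A), 1:]"] by simp
  moreover have "degree h \<le> card S - 1"
    unfolding h_def using degree_prod_sum_le[of "S - {i0}" "\<lambda>i. [:- pt i, 1:]"] fin assms(2) by simp
  moreover have "card S \<ge> 1"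
    using assms(2) fin by (metis One_nat_def Suc_leI card_gt_0_iff empty_iff)
  ultimately have "degree (G * h) < m"
    using degree_mult_le[of G h] assms(3) k_le_m by linarith
  then show "G * h \<in> vanishing_polys"
    unfolding vanishing_polys_def G_def by (auto simp: poly_prod intro!: prod_zero)
  show "poly (G * h) (pt i) = 0" if "i \<in> S - {i0}" for i
    unfolding h_def using that fin by (auto simp: poly_prod intro!: prod_zero bexI[of _ i])
  have "i0 < n"
    using assms(1,2) by auto
  moreover have "pt i0 \<noteq> pt i" if "i \<in> S - {i0}" for i
    using that assms(1,2) inj_onD[OF inj_on_pt, of i0 i] by auto
  ultimately show "poly (G * h) (pt i0) \<noteq> 0"
    unfolding G_def h_def using fin pt_neq_message_pt by (simp add: poly_prod prod_zero_iff)
qed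

lemma hwt_dual_subcode_minus_dual_code:
  assumes y: "y \<in> dual_code n rs_subcode - dual_code n rs_code"
  shows "m - k + 1 \<le> hwt n y"
proof (rule ccontr)
  let ?S = "{i. i < n \<and> y i \<noteq> 0}"
  assume "\<not> m - k + 1 \<le> hwt n y"
  then have card: "card ?S \<le> m - k"
    unfolding hwt_def by simp
  have "y \<in> vecs n"
    using y unfolding dual_code_def by auto
  moreover have "y \<noteq> (\<lambda>_. 0)"
    using y unfolding dual_code_def dotp_def vecs_def by auto
  ultimately obtain i0 where i0: "i0 \<in> ?S"
    unfolding vecs_def by (metis (mono_tags, lifting) mem_Collect_eq not_le)
  obtain f where f: "f \<in> vanishing_polys" "\<And>i. i \<in> ?S - {i0} \<Longrightarrow> poly f (pt i) = 0"
    "poly f (pt i0) \<noteq> 0"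
    using separating_vanishing_poly[OF _ i0 card] by blast
  have "dotp n (eval_vec n pt f) y = (\<Sum>i<n. if i = i0 then poly f (pt i0) * y i0 else 0)"
    unfolding dotp_def eval_vec_def using f(2) by (intro sum.cong refl) auto
  also have "\<dots> = poly f (pt i0) * y i0"
    using i0 by simp
  also have "\<dots> \<noteq> 0"
    using i0 f(3) by simp
  finally show False
    using y f(1) unfolding dual_code_def rs_subcode_def by auto
qed

lemma rs_css_distance: "css_distance_ge n rs_code rs_subcode (min (n - m + 1) (m - k + 1))"
  unfolding css_distance_ge_def
  using hwt_rs_code_minus_subcode hwt_dual_subcode_minus_dual_code by fastforce

lemma coset_member_eval_vec:
  assumes "x \<in> {vadd (rs_encode u) c | c. c \<in> rs_subcode}"
  obtains F where "x = eval_vec n pt F" "degree F < m" "\<And>A. A < k \<Longrightarrow> poly F (pt (n + A)) = u A"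
proof -
  obtain g where g: "g \<in> vanishing_polys" "x = vadd (rs_encode u) (eval_vec n pt g)"
    using assms unfolding rs_subcode_def by auto
  show ?thesis
  proof
    show "x = eval_vec n pt (message_poly u + g)"
      using g(2) by (simp add: rs_encode_def eval_vec_add)
    show "degree (message_poly u + g) < m"
      using g(1) by (rule degree_message_poly_add_vanishing)
    show "poly (message_poly u + g) (pt (n + A)) = u A" if "A < k" for A
      using that g(1) by (simp add: poly_message_poly vanishing_polys_def)
  qed
qed

definition gate_coeffs :: "'a \<Rightarrow> nat \<Rightarrow> nat \<Rightarrow> 'a" where
  "gate_coeffs \<beta> A i = \<beta> * poly (lagrange_basis {..<n} pt i) (pt (n + A))"

end

locale rs_css_char2 = rs_css n k m pt for n k m :: nat and pt :: "nat \<Rightarrow> 'a::{finite,field}" +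
  fixes t :: nat
  assumes card_UNIV: "card (UNIV :: 'a set) = 2 ^ t"
begin

lemma transversal_phase_eval_vec:
  assumes deg: "l * (m - 1) < n"
    and A: "A < k" and F: "\<And>j. j < e \<Longrightarrow> xs j = eval_vec n pt (F j) \<and> degree (F j) < m"
  shows "transversal_phase t n (mpoly_eval e l c) (gate_coeffs \<beta> A) xs
           = trsign t (\<beta> * mpoly_eval e l c (\<lambda>j. poly (F j) (pt (n + A))))"
proof -
  have "degree (F j) \<le> m - 1" if "j < e" for j
    using F[OF that] by linarith
  then have "mpoly_eval e l c (\<lambda>j. poly (F j) (pt (n + A)))
          = (\<Sum>i<n. poly (lagrange_basis {..<n} pt i) (pt (n + A)) * mpoly_eval e l c (\<lambda>j. poly (F j) (pt i)))"
    using deg by (intro mpoly_eval_interpolation[OF _ inj_on_pt]) simp_all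
  also have "\<dots> = (\<Sum>i<n. poly (lagrange_basis {..<n} pt i) (pt (n + A)) * mpoly_eval e l c (\<lambda>j. xs j i))"
    using F by (intro sum.cong refl arg_cong2[where f = "(*)"] mpoly_eval_cong) (simp add: eval_vec_def)
  finally have "\<beta> * mpoly_eval e l c (\<lambda>j. poly (F j) (pt (n + A)))
                  = (\<Sum>i<n. gate_coeffs \<beta> A i * mpoly_eval e l c (\<lambda>j. xs j i))"
    by (simp add: gate_coeffs_def sum_distrib_left mult.assoc)
  then show ?thesis
    unfolding transversal_phase_def by (simp add: trsign_sum[OF card_UNIV])
qed

lemma transversal_gate:
  assumes "l * (m - 1) < n" "A < k"
  shows "apply_diag (transversal_phase t n (mpoly_eval e l c) (gate_coeffs \<beta> A))
           (tensor_state n e (\<lambda>j. logical_state rs_subcode rs_encode (us j)))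
         = (\<lambda>xs. trsign t (\<beta> * mpoly_eval e l c (\<lambda>j. us j A))
                  * tensor_state n e (\<lambda>j. logical_state rs_subcode rs_encode (us j)) xs)"
proof
  fix xs
  let ?\<psi> = "tensor_state n e (\<lambda>j. logical_state rs_subcode rs_encode (us j))"
  show "apply_diag (transversal_phase t n (mpoly_eval e l c) (gate_coeffs \<beta> A)) ?\<psi> xs
          = trsign t (\<beta> * mpoly_eval e l c (\<lambda>j. us j A)) * ?\<psi> xs"
  proof (cases "?\<psi> xs = 0")
    case False
    then have coset: "xs j \<in> {vadd (rs_encode (us j)) c | c. c \<in> rs_subcode}" if "j < e" for j
      using that unfolding tensor_state_def logical_state_def by (auto split: if_splits)
    have "\<exists>F. xs j = eval_vec n pt F \<and> degree F < m \<and> poly F (pt (n + A)) = us j A" if "j < e" for j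
      using coset_member_eval_vec[OF coset[OF that]] assms(2) by metis
    then obtain F where F: "\<And>j. j < e \<Longrightarrow> xs j = eval_vec n pt (F j) \<and> degree (F j) < m \<and> poly (F j) (pt (n + A)) = us j A"
      by (metis choice_iff')
    have "transversal_phase t n (mpoly_eval e l c) (gate_coeffs \<beta> A) xs
            = trsign t (\<beta> * mpoly_eval e l c (\<lambda>j. poly (F j) (pt (n + A))))"
      using F by (intro transversal_phase_eval_vec[OF assms]) auto
    also have "\<dots> = trsign t (\<beta> * mpoly_eval e l c (\<lambda>j. us j A))"
      using F by (intro arg_cong[where f = "\<lambda>y. trsign t (\<beta> * y)"] mpoly_eval_cong) simp
    finally show ?thesis
      by (simp add: apply_diag_def)
  qed (simp add: apply_diag_def)
qed

end

lemma rate_condition_bounds: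
  fixes lbar m n :: nat
  assumes "real m < 1 + real n / real lbar" "1 \<le> m"
  shows "lbar * (m - 1) < n" "m \<le> n"
proof -
  have "lbar \<noteq> 0"
    using assms by (cases "lbar = 0") auto
  then have "real m * real lbar < real lbar + real n"
    using assms(1) by (simp add: field_simps)
  then have "real (lbar * (m - 1)) < real n"
    using assms(2) by (simp add: of_nat_diff algebra_simps)
  then show "lbar * (m - 1) < n"
    by linarith
  moreover have "m - 1 \<le> lbar * (m - 1)"
    using \<open>lbar \<noteq> 0\<close> by simp
  ultimately show "m \<le> n"
    using assms(2) by linarith
qed

theorem theorem5p3:
  fixes lbar m n k t :: nat
  assumes "real m < 1 + real n / real lbar"
    and "1 \<le> k" and "k \<le> m"
    and "card (UNIV :: 'a::{finite,field} set) = 2 ^ t"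
    and "n + k \<le> 2 ^ t"
  shows "\<exists>(C1 :: (nat \<Rightarrow> 'a) set) C2 Enc.
     css_code n k C1 C2 Enc \<and>
     css_distance_ge n C1 C2 (min (n - m + 1) (m - k + 1)) \<and>
     (\<forall>e l. 1 \<le> e \<longrightarrow> e \<le> lbar \<longrightarrow> l \<le> lbar \<longrightarrow>
        (\<forall>(c :: (nat \<Rightarrow> nat) \<Rightarrow> 'a) A (\<beta> :: 'a). A < k \<longrightarrow>
           (\<exists>\<beta>s ph. cmod ph = 1 \<and>
              (\<forall>us. (\<forall>j<e. us j \<in> vecs k) \<longrightarrow>
                 apply_diag (transversal_phase t n (mpoly_eval e l c) \<beta>s)
                   (tensor_state n e (\<lambda>j. logical_state C2 Enc (us j)))
                 = (\<lambda>xs. ph * trsign t (\<beta> * mpoly_eval e l c (\<lambda>j. us j A))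
                          * tensor_state n e (\<lambda>j. logical_state C2 Enc (us j)) xs)))))"
proof -
  have bounds: "lbar * (m - 1) < n" "m \<le> n"
    using rate_condition_bounds[OF assms(1)] assms(2,3) by simp_all
  obtain pt :: "nat \<Rightarrow> 'a" where "inj_on pt {..<n + k}"
    using card_le_inj[of "{..<n + k}" "UNIV :: 'a set"] assms(4,5) by auto
  then interpret rs_css_char2 n k m pt t
    using assms bounds by unfold_locales simp_all
  show ?thesis
  proof (rule exI[of _ rs_code], rule exI[of _ rs_subcode], rule exI[of _ rs_encode], intro conjI allI impI)
    show "css_code n k rs_code rs_subcode rs_encode"
      by (rule css_code_rs)
    show "css_distance_ge n rs_code rs_subcode (min (n - m + 1) (m - k + 1))"
      by (rule rs_css_distance)
    fix e l c A \<beta>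
    assume "l \<le> lbar" "A < k"
    moreover have "l * (m - 1) < n"
      using bounds(1) mult_right_mono[OF \<open>l \<le> lbar\<close>, of "m - 1"] by linarith
    ultimately show "\<exists>\<beta>s ph. cmod ph = 1 \<and> (\<forall>us. (\<forall>j<e. us j \<in> vecs k) \<longrightarrow>
        apply_diag (transversal_phase t n (mpoly_eval e l c) \<beta>s)
          (tensor_state n e (\<lambda>j. logical_state rs_subcode rs_encode (us j)))
        = (\<lambda>xs. ph * trsign t (\<beta> * mpoly_eval e l c (\<lambda>j. us j A))
            * tensor_state n e (\<lambda>j. logical_state rs_subcode rs_encode (us j)) xs))"
      using transversal_gate by (intro exI[of _ "gate_coeffs \<beta> A"] exI[of _ 1]) simp
  qed
qed

end
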